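(* Let $n>m\ge 1$ and $T\ge 1$ be integers, let $0<\gamma<1$, and let $x_0,x_1,x_2,\ldots\in[-1,1]^m$. Let $\sigma:\mathbb{R}\to[-1,1]$ be a nondecreasing differentiable function, applied componentwise to vectors, with $\sup_z \sigma'(z)\le 1$. Let $H\in\mathbb{R}^{m\times n}$ be the projection onto the first $m$ coordinates. Let $(F_i,G_i)_{i\ge 0}$ be a sequence with $F_i\in\mathbb{R}^{n\times n}$, $G_i\in\mathbb{R}^{n\times(m+1)}$, and suppose that $\|F_i\|_\infty\le 1/\sqrt{\gamma}$ for all $i$. For each $i$, let $(u_0,\dots,u_T)$ be given by $u_0=0$, $u_{t+1}=\sigma(F_iu_t+G_i[x_t;1])$ for $0\le t<T$. Define $s^{(0)}_t(u)=u$, $s^{(1)}_t(u)=\sigma(F_iu+G_i[x_t;1])$ and, for $k\ge 2$, $s^{(k)}_t(u)=\sigma\big(F_i s^{(k-1)}_t(u)+G_i[Hs^{(k-1)}_t(u);1]\big)$. For $1\le t\le T$ and $k\ge1$ put $e_{t,k}=Hs^{(k)}_t(u_t)-x_{t+k}\in\mathbb{R}^m$ and $$m(k)=\prod_{j=1}^{k}\operatorname{diag}\!\big(\sigma'(s^{(j-1)}_t(u_t))\big)F_i\in\mathbb{R}^{n\times n}$$ (ordered product). For $1\le a,b,c\le n$ and $1\le d\le m+1$ and $K\in\{1,2,\dots\}\cup\{\infty\}$ set $$D^{F,K}_{ab}(i)=\sum_{t=1}^T\sum_{k=1}^{K}\gamma^k\, e_{t,k}^\top H\,[m(k)]_a\,[u_t]_b,\qquad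 D^{G,K}_{cd}(i)=\sum_{t=1}^T\sum_{k=1}^{K}\gamma^k\, e_{t,k}^\top H\,[m(k)]_c\,\big[[x_{t+k};1]\big]_d .$$ Then the series $D^{F,\infty}_{ab}(i)$ and $D^{G,\infty}_{cd}(i)$ converge, and for every $\epsilon_0>0$ there exists $K$ such that for all $i$ and all indices $a,b,c,d$, $$|D^{F,\infty}_{ab}(i)-D^{F,K}_{ab}(i)|<\epsilon_0\quad\text{and}\quad |D^{G,\infty}_{cd}(i)-D^{G,K}_{cd}(i)|<\epsilon_0 .$$
   Context: This concerns a recurrent network $u_{t+1}=\sigma(Fu_t+G[x_t;1])$ with outputs $Hu_t$; $[x;1]\in\mathbb{R}^{m+1}$ denotes $x$ with a constant $1$ appended (bias component). $D^{F,\infty}$, $D^{G,\infty}$ are the paper's expressions for the gradient of the discounted multi-step prediction cost $\sum_{t}\sum_{k\ge1}\gamma^k\|e_{t,k}\|^2$ with respect to $F$ and $G$, evaluated at $(F_i,G_i)$, and $D^{F,K}$, $D^{G,K}$ are the corresponding truncations at lookahead $K$. $[v]_b$ denotes the $b$-th component of a vector $v$, $[M]_a$ the $a$-th column of a matrix $M$, and $\operatorname{diag}(v)$ the diagonal matrix with diagonal $v$. For a matrix $A$, $\|A\|_\infty$ is the operator norm induced by the maximum norm on vectors (maximum absolute row sum). *)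

theory Defs
  imports "HOL-Analysis.Analysis"
begin

text \<open>Vectors are functions nat => real (0-indexed, only the first p entries matter);
matrices are functions nat => nat => real (entry in row r, column j is A r j).\<close>

definition mv :: "nat \<Rightarrow> (nat \<Rightarrow> nat \<Rightarrow> real) \<Rightarrow> (nat \<Rightarrow> real) \<Rightarrow> nat \<Rightarrow> real" where
  "mv p A v = (\<lambda>r. \<Sum>j<p. A r j * v j)"

definition mm :: "nat \<Rightarrow> (nat \<Rightarrow> nat \<Rightarrow> real) \<Rightarrow> (nat \<Rightarrow> nat \<Rightarrow> real) \<Rightarrow> nat \<Rightarrow> nat \<Rightarrow> real" where
  "mm p A B = (\<lambda>r j. \<Sum>l<p. A r l * B l j)"

definition idm :: "nat \<Rightarrow> nat \<Rightarrow> real" where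
  "idm = (\<lambda>r j. if r = j then 1 else 0)"

definition diagm :: "(nat \<Rightarrow> real) \<Rightarrow> nat \<Rightarrow> nat \<Rightarrow> real" where
  "diagm v = (\<lambda>r j. if r = j then v r else 0)"

text \<open>Maximum absolute row sum of an n x n matrix (operator norm induced by the max norm).\<close>
definition inf_norm :: "nat \<Rightarrow> (nat \<Rightarrow> nat \<Rightarrow> real) \<Rightarrow> real" where
  "inf_norm p A = Max ((\<lambda>r. \<Sum>j<p. \<bar>A r j\<bar>) ` {..<p})"

definition aug :: "nat \<Rightarrow> (nat \<Rightarrow> real) \<Rightarrow> nat \<Rightarrow> real" where
  "aug m v = (\<lambda>d. if d < m then v d else 1)"

definition Hproj :: "nat \<Rightarrow> (nat \<Rightarrow> real) \<Rightarrow> nat \<Rightarrow> real" where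
  "Hproj m v = (\<lambda>j. if j < m then v j else 0)"

definition rnn_step :: "(real \<Rightarrow> real) \<Rightarrow> nat \<Rightarrow> nat \<Rightarrow> (nat \<Rightarrow> nat \<Rightarrow> real) \<Rightarrow> (nat \<Rightarrow> nat \<Rightarrow> real)
    \<Rightarrow> (nat \<Rightarrow> real) \<Rightarrow> (nat \<Rightarrow> real) \<Rightarrow> nat \<Rightarrow> real" where
  "rnn_step \<sigma> n m F G v w = (\<lambda>r. \<sigma> (mv n F v r + mv (m + 1) G (aug m w) r))"

fun traj :: "(real \<Rightarrow> real) \<Rightarrow> nat \<Rightarrow> nat \<Rightarrow> (nat \<Rightarrow> nat \<Rightarrow> real) \<Rightarrow> (nat \<Rightarrow> nat \<Rightarrow> real)
    \<Rightarrow> (nat \<Rightarrow> nat \<Rightarrow> real) \<Rightarrow> nat \<Rightarrow> nat \<Rightarrow> real" where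
  "traj \<sigma> n m F G x 0 = (\<lambda>_. 0)"
| "traj \<sigma> n m F G x (Suc t) = rnn_step \<sigma> n m F G (traj \<sigma> n m F G x t) (x t)"

fun spred :: "(real \<Rightarrow> real) \<Rightarrow> nat \<Rightarrow> nat \<Rightarrow> (nat \<Rightarrow> nat \<Rightarrow> real) \<Rightarrow> (nat \<Rightarrow> nat \<Rightarrow> real)
    \<Rightarrow> (nat \<Rightarrow> nat \<Rightarrow> real) \<Rightarrow> nat \<Rightarrow> nat \<Rightarrow> (nat \<Rightarrow> real) \<Rightarrow> nat \<Rightarrow> real" where
  "spred \<sigma> n m F G x t 0 u = u"
| "spred \<sigma> n m F G x t (Suc 0) u = rnn_step \<sigma> n m F G u (x t)"
| "spred \<sigma> n m F G x t (Suc (Suc k)) u =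
     rnn_step \<sigma> n m F G (spred \<sigma> n m F G x t (Suc k) u) (Hproj m (spred \<sigma> n m F G x t (Suc k) u))"

definition err :: "(real \<Rightarrow> real) \<Rightarrow> nat \<Rightarrow> nat \<Rightarrow> (nat \<Rightarrow> nat \<Rightarrow> real) \<Rightarrow> (nat \<Rightarrow> nat \<Rightarrow> real)
    \<Rightarrow> (nat \<Rightarrow> nat \<Rightarrow> real) \<Rightarrow> nat \<Rightarrow> nat \<Rightarrow> nat \<Rightarrow> real" where
  "err \<sigma> n m F G x t k = (\<lambda>j. Hproj m (spred \<sigma> n m F G x t k (traj \<sigma> n m F G x t)) j - x (t + k) j)"

fun mprod :: "(real \<Rightarrow> real) \<Rightarrow> (real \<Rightarrow> real) \<Rightarrow> nat \<Rightarrow> nat \<Rightarrow> (nat \<Rightarrow> nat \<Rightarrow> real) \<Rightarrow> (nat \<Rightarrow> nat \<Rightarrow> real)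
    \<Rightarrow> (nat \<Rightarrow> nat \<Rightarrow> real) \<Rightarrow> nat \<Rightarrow> nat \<Rightarrow> nat \<Rightarrow> nat \<Rightarrow> real" where
  "mprod \<sigma> \<sigma>' n m F G x t 0 = idm"
| "mprod \<sigma> \<sigma>' n m F G x t (Suc k) =
     mm n (mprod \<sigma> \<sigma>' n m F G x t k)
        (mm n (diagm (\<lambda>r. \<sigma>' (spred \<sigma> n m F G x t k (traj \<sigma> n m F G x t) r))) F)"

definition eHm :: "(real \<Rightarrow> real) \<Rightarrow> (real \<Rightarrow> real) \<Rightarrow> nat \<Rightarrow> nat \<Rightarrow> (nat \<Rightarrow> nat \<Rightarrow> real) \<Rightarrow> (nat \<Rightarrow> nat \<Rightarrow> real)
    \<Rightarrow> (nat \<Rightarrow> nat \<Rightarrow> real) \<Rightarrow> nat \<Rightarrow> nat \<Rightarrow> nat \<Rightarrow> real" where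
  "eHm \<sigma> \<sigma>' n m F G x t k a =
     (\<Sum>j<m. err \<sigma> n m F G x t k j * mprod \<sigma> \<sigma>' n m F G x t k j a)"

definition termF :: "(real \<Rightarrow> real) \<Rightarrow> (real \<Rightarrow> real) \<Rightarrow> nat \<Rightarrow> nat \<Rightarrow> (nat \<Rightarrow> nat \<Rightarrow> real) \<Rightarrow> (nat \<Rightarrow> nat \<Rightarrow> real)
    \<Rightarrow> (nat \<Rightarrow> nat \<Rightarrow> real) \<Rightarrow> real \<Rightarrow> nat \<Rightarrow> nat \<Rightarrow> nat \<Rightarrow> nat \<Rightarrow> real" where
  "termF \<sigma> \<sigma>' n m F G x \<gamma> t k a b =
     \<gamma> ^ k * eHm \<sigma> \<sigma>' n m F G x t k a * traj \<sigma> n m F G x t b"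

definition termG :: "(real \<Rightarrow> real) \<Rightarrow> (real \<Rightarrow> real) \<Rightarrow> nat \<Rightarrow> nat \<Rightarrow> (nat \<Rightarrow> nat \<Rightarrow> real) \<Rightarrow> (nat \<Rightarrow> nat \<Rightarrow> real)
    \<Rightarrow> (nat \<Rightarrow> nat \<Rightarrow> real) \<Rightarrow> real \<Rightarrow> nat \<Rightarrow> nat \<Rightarrow> nat \<Rightarrow> nat \<Rightarrow> real" where
  "termG \<sigma> \<sigma>' n m F G x \<gamma> t k c d =
     \<gamma> ^ k * eHm \<sigma> \<sigma>' n m F G x t k c * aug m (x (t + k)) d"

definition DF_K where
  "DF_K \<sigma> \<sigma>' n m F G x \<gamma> T K a b = (\<Sum>t=1..T. \<Sum>k=1..K. termF \<sigma> \<sigma>' n m F G x \<gamma> t k a b)"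
definition DG_K where
  "DG_K \<sigma> \<sigma>' n m F G x \<gamma> T K c d = (\<Sum>t=1..T. \<Sum>k=1..K. termG \<sigma> \<sigma>' n m F G x \<gamma> t k c d)"
definition DF_inf where
  "DF_inf \<sigma> \<sigma>' n m F G x \<gamma> T a b = (\<Sum>t=1..T. \<Sum>k. termF \<sigma> \<sigma>' n m F G x \<gamma> t (Suc k) a b)"
definition DG_inf where
  "DG_inf \<sigma> \<sigma>' n m F G x \<gamma> T c d = (\<Sum>t=1..T. \<Sum>k. termG \<sigma> \<sigma>' n m F G x \<gamma> t (Suc k) c d)"

end

theory Submission
  imports Defs
begin

text \<open>Every term of the series is uniformly bounded by a geometric one: the prediction error
  has entries in \<open>[-2, 2]\<close>, the state and \<open>[x; 1]\<close> have entries in \<open>[-1, 1]\<close>, and since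
  \<open>0 \<le> \<sigma>' \<le> 1\<close> each factor \<open>diag(\<sigma>'(\<dots>)) F\<close> of \<open>m(k)\<close> has row sums at most \<open>\<parallel>F\<parallel>\<^sub>\<infinity> \<le> 1/\<surd>\<gamma>\<close>.
  Hence the \<open>k\<close>-th term is at most \<open>2 m \<gamma>\<^sup>k (1/\<surd>\<gamma>)\<^sup>k = 2 m (\<surd>\<gamma>)\<^sup>k\<close> in absolute value,
  independently of \<open>i\<close>, \<open>t\<close> and the indices, and the geometric tail after \<open>K\<close> terms
  is small uniformly.\<close>

definition row_norm :: "nat \<Rightarrow> (nat \<Rightarrow> nat \<Rightarrow> real) \<Rightarrow> nat \<Rightarrow> real" where
  "row_norm n A r = (\<Sum>j<n. \<bar>A r j\<bar>)"

lemma abs_entry_le_row_norm: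
  assumes "j < n"
  shows "\<bar>A r j\<bar> \<le> row_norm n A r"
  unfolding row_norm_def using assms by (intro member_le_sum) auto

lemma row_norm_le_inf_norm:
  assumes "r < n"
  shows "row_norm n A r \<le> inf_norm n A"
  unfolding inf_norm_def row_norm_def using assms by (intro Max_ge) auto

lemma row_norm_idm: "row_norm n idm r \<le> 1"
  by (simp add: row_norm_def idm_def if_distrib sum.delta cong: if_cong)

lemma row_norm_mm_le:
  assumes "\<And>l. l < n \<Longrightarrow> row_norm n B l \<le> c"
  shows "row_norm n (mm n A B) r \<le> row_norm n A r * c"
proof -
  have "row_norm n (mm n A B) r = (\<Sum>j<n. \<bar>\<Sum>l<n. A r l * B l j\<bar>)"
    by (simp add: row_norm_def mm_def)
  also have "\<dots> \<le> (\<Sum>j<n. \<Sum>l<n. \<bar>A r l\<bar> * \<bar>B l j\<bar>)"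
    by (intro sum_mono order_trans[OF sum_abs]) (simp add: abs_mult)
  also have "\<dots> = (\<Sum>l<n. \<Sum>j<n. \<bar>A r l\<bar> * \<bar>B l j\<bar>)"
    by (rule sum.swap)
  also have "\<dots> = (\<Sum>l<n. \<bar>A r l\<bar> * row_norm n B l)"
    by (simp add: row_norm_def sum_distrib_left)
  also have "\<dots> \<le> (\<Sum>l<n. \<bar>A r l\<bar> * c)"
    using assms by (intro sum_mono mult_left_mono) auto
  also have "\<dots> = row_norm n A r * c"
    by (simp add: row_norm_def sum_distrib_right)
  finally show ?thesis .
qed

lemma row_norm_diagm_mm_le:
  assumes "l < n" "\<bar>s l\<bar> \<le> 1" "inf_norm n F \<le> c"
  shows "row_norm n (mm n (diagm s) F) l \<le> c"
proof -
  have "mm n (diagm s) F l j = (\<Sum>i<n. if i = l then s l * F l j else 0)" for j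
    unfolding mm_def diagm_def by (intro sum.cong) auto
  then have "row_norm n (mm n (diagm s) F) l = \<bar>s l\<bar> * row_norm n F l"
    using assms(1) by (simp add: row_norm_def abs_mult sum_distrib_left)
  also have "\<dots> \<le> row_norm n F l"
    using assms(2) by (simp add: mult_left_le_one_le row_norm_def sum_nonneg)
  also have "\<dots> \<le> c"
    using order_trans[OF row_norm_le_inf_norm[OF assms(1)] assms(3)] .
  finally show ?thesis .
qed

lemma row_norm_mprod_le:
  assumes "\<forall>z. \<bar>\<sigma>' z\<bar> \<le> 1" "inf_norm n F \<le> c" "0 \<le> c"
  shows "row_norm n (mprod \<sigma> \<sigma>' n m F G x t k) r \<le> c ^ k"
proof (induction k arbitrary: r)
  case 0
  show ?case using row_norm_idm by simp
next
  case (Suc k)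
  have "row_norm n (mprod \<sigma> \<sigma>' n m F G x t (Suc k)) r
      \<le> row_norm n (mprod \<sigma> \<sigma>' n m F G x t k) r * c"
    using assms(1,2) by (simp add: row_norm_mm_le row_norm_diagm_mm_le)
  also have "\<dots> \<le> c ^ k * c"
    using Suc assms(3) by (rule mult_right_mono)
  finally show ?case by (simp add: mult.commute)
qed

lemma abs_traj_le_one:
  assumes "\<forall>z. \<bar>\<sigma> z\<bar> \<le> 1"
  shows "\<bar>traj \<sigma> n m F G x t b\<bar> \<le> 1"
  using assms by (cases t) (auto simp: rnn_step_def)

lemma abs_spred_le_one:
  assumes "\<forall>z. \<bar>\<sigma> z\<bar> \<le> 1" "1 \<le> k"
  shows "\<bar>spred \<sigma> n m F G x t k u j\<bar> \<le> 1"
proof -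
  obtain k' where "k = Suc k'" using assms(2) by (cases k) auto
  then show ?thesis using assms(1) by (cases k') (auto simp: rnn_step_def)
qed

lemma abs_err_le_two:
  assumes "\<forall>z. \<bar>\<sigma> z\<bar> \<le> 1" "\<forall>t j. j < m \<longrightarrow> \<bar>x t j\<bar> \<le> 1" "1 \<le> k" "j < m"
  shows "\<bar>err \<sigma> n m F G x t k j\<bar> \<le> 2"
proof -
  have "\<bar>spred \<sigma> n m F G x t k (traj \<sigma> n m F G x t) j\<bar> \<le> 1" "\<bar>x (t + k) j\<bar> \<le> 1"
    using abs_spred_le_one[OF assms(1,3)] assms(2,4) by blast+
  then show ?thesis
    using assms(4) by (simp add: err_def Hproj_def abs_le_iff)
qed

lemma abs_eHm_le:
  assumes "\<forall>z. \<bar>\<sigma> z\<bar> \<le> 1" "\<forall>t j. j < m \<longrightarrow> \<bar>x t j\<bar> \<le> 1" "1 \<le> k"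
    and "\<forall>z. \<bar>\<sigma>' z\<bar> \<le> 1" "inf_norm n F \<le> c" "0 \<le> c" "a < n"
  shows "\<bar>eHm \<sigma> \<sigma>' n m F G x t k a\<bar> \<le> 2 * real m * c ^ k"
proof -
  have "\<bar>eHm \<sigma> \<sigma>' n m F G x t k a\<bar>
      \<le> (\<Sum>j<m. \<bar>err \<sigma> n m F G x t k j\<bar> * \<bar>mprod \<sigma> \<sigma>' n m F G x t k j a\<bar>)"
    unfolding eHm_def by (rule order_trans[OF sum_abs]) (simp add: abs_mult)
  also have "\<dots> \<le> (\<Sum>j<m. 2 * c ^ k)"
  proof (intro sum_mono mult_mono)
    fix j
    assume "j \<in> {..<m}"
    then show "\<bar>err \<sigma> n m F G x t k j\<bar> \<le> 2"
      using abs_err_le_two[OF assms(1-3)] by simp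
    show "\<bar>mprod \<sigma> \<sigma>' n m F G x t k j a\<bar> \<le> c ^ k"
      by (rule order_trans[OF abs_entry_le_row_norm[OF assms(7)] row_norm_mprod_le[OF assms(4-6)]])
  qed (use assms(6) in auto)
  finally show ?thesis by simp
qed

lemma summable_shift_if_geometric_bound:
  fixes f :: "nat \<Rightarrow> real"
  assumes "\<And>k. 1 \<le> k \<Longrightarrow> \<bar>f k\<bar> \<le> B * q ^ k" "0 \<le> q" "q < 1"
  shows "summable (\<lambda>k. f (Suc k))"
proof (rule summable_comparison_test)
  have "norm (f (Suc k)) \<le> B * q ^ Suc k" for k
    using assms(1)[of "Suc k"] by simp
  then show "\<exists>N. \<forall>k\<ge>N. norm (f (Suc k)) \<le> B * q ^ Suc k"
    by blast
  show "summable (\<lambda>k. B * q ^ Suc k)"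
    using assms(2,3) by (intro summable_mult summable_mult2 summable_geometric) auto
qed

lemma abs_suminf_shift_minus_sum_le:
  fixes f :: "nat \<Rightarrow> real"
  assumes "\<And>k. 1 \<le> k \<Longrightarrow> \<bar>f k\<bar> \<le> B * q ^ k" "0 \<le> q" "q < 1"
  shows "\<bar>(\<Sum>k. f (Suc k)) - (\<Sum>k=1..K. f k)\<bar> \<le> B * q ^ Suc K / (1 - q)"
proof -
  have "(\<Sum>k. f (Suc k)) = (\<Sum>j. f (Suc (j + K))) + (\<Sum>k<K. f (Suc k))"
    using suminf_split_initial_segment[OF summable_shift_if_geometric_bound[OF assms], of K]
    by simp
  moreover have "(\<Sum>k=1..K. f k) = (\<Sum>k<K. f (Suc k))"
    by (simp add: sum.atLeast1_atMost_eq)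
  ultimately have tail: "(\<Sum>k. f (Suc k)) - (\<Sum>k=1..K. f k) = (\<Sum>j. f (Suc (j + K)))"
    by simp
  have "norm (\<Sum>j. f (Suc (j + K))) \<le> (\<Sum>j. B * q ^ Suc K * q ^ j)"
  proof (rule norm_suminf_le)
    show "norm (f (Suc (j + K))) \<le> B * q ^ Suc K * q ^ j" for j
      using assms(1)[of "Suc (j + K)"] by (simp add: power_add mult_ac)
    show "summable (\<lambda>j. B * q ^ Suc K * q ^ j)"
      using assms(2,3) by (intro summable_mult summable_geometric) auto
  qed
  also have "\<dots> = B * q ^ Suc K / (1 - q)"
    using assms(2,3) by (subst suminf_mult) (auto simp: suminf_geometric)
  finally show ?thesis using tail by simp
qed

lemma abs_sum_suminf_shift_minus_sum_le:
  fixes g :: "'a \<Rightarrow> nat \<Rightarrow> real"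
  assumes "\<And>t k. t \<in> A \<Longrightarrow> 1 \<le> k \<Longrightarrow> \<bar>g t k\<bar> \<le> B * q ^ k" "0 \<le> q" "q < 1"
  shows "\<bar>(\<Sum>t\<in>A. \<Sum>k. g t (Suc k)) - (\<Sum>t\<in>A. \<Sum>k=1..K. g t k)\<bar>
    \<le> card A * (B * q ^ Suc K / (1 - q))"
proof -
  have "\<bar>(\<Sum>t\<in>A. \<Sum>k. g t (Suc k)) - (\<Sum>t\<in>A. \<Sum>k=1..K. g t k)\<bar>
      \<le> (\<Sum>t\<in>A. \<bar>(\<Sum>k. g t (Suc k)) - (\<Sum>k=1..K. g t k)\<bar>)"
    by (simp only: sum_subtractf[symmetric] sum_abs)
  also have "\<dots> \<le> (\<Sum>t\<in>A. B * q ^ Suc K / (1 - q))"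
    using assms by (intro sum_mono abs_suminf_shift_minus_sum_le) auto
  finally show ?thesis by simp
qed

lemma ex_geometric_tail_less:
  fixes q C \<epsilon> :: real
  assumes "0 \<le> q" "q < 1" "0 < \<epsilon>"
  shows "\<exists>K \<ge> 1. C * q ^ Suc K / (1 - q) < \<epsilon>"
proof -
  have "(\<lambda>K. C * q ^ Suc K / (1 - q)) \<longlonglongrightarrow> 0"
    using assms(1,2)
    by (intro tendsto_mult_right_zero tendsto_divide_zero LIMSEQ_Suc LIMSEQ_power_zero) simp
  from order_tendstoD(2)[OF this assms(3)]
  have "\<forall>\<^sub>F K in sequentially. 1 \<le> K \<and> C * q ^ Suc K / (1 - q) < \<epsilon>"
    by (rule eventually_conj[OF eventually_ge_at_top, rotated])
  then show ?thesis
    by (auto simp: eventually_sequentially)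
qed

lemma abs_deriv_le_one_if_mono:
  fixes f f' :: "real \<Rightarrow> real"
  assumes "mono f" "\<forall>z. (f has_real_derivative f' z) (at z)" "\<forall>z. f' z \<le> 1"
  shows "\<forall>z. \<bar>f' z\<bar> \<le> 1"
proof
  fix z
  have "0 \<le> f' z"
    using mono_on_imp_deriv_nonneg[of UNIV f "f' z" z] assms(1,2) by simp
  then show "\<bar>f' z\<bar> \<le> 1"
    using assms(3) by simp
qed

context
  fixes \<sigma> \<sigma>' :: "real \<Rightarrow> real" and n m :: nat and F :: "nat \<Rightarrow> nat \<Rightarrow> real"
    and x :: "nat \<Rightarrow> nat \<Rightarrow> real" and \<gamma> :: real
  assumes x_bound: "\<forall>t j. j < m \<longrightarrow> \<bar>x t j\<bar> \<le> 1"
    and \<sigma>_bound: "\<forall>z. \<bar>\<sigma> z\<bar> \<le> 1"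
    and \<sigma>'_bound: "\<forall>z. \<bar>\<sigma>' z\<bar> \<le> 1"
    and F_bound: "inf_norm n F \<le> 1 / sqrt \<gamma>"
    and \<gamma>_pos: "0 < \<gamma>"
begin

lemma abs_gamma_pow_eHm_le:
  assumes "1 \<le> k" "a < n"
  shows "\<bar>\<gamma> ^ k * eHm \<sigma> \<sigma>' n m F G x t k a\<bar> \<le> 2 * real m * sqrt \<gamma> ^ k"
proof -
  have "\<gamma> * (1 / sqrt \<gamma>) = sqrt \<gamma>"
    using \<gamma>_pos real_div_sqrt[of \<gamma>] by simp
  then have gamma_pow: "\<gamma> ^ k * (1 / sqrt \<gamma>) ^ k = sqrt \<gamma> ^ k"
    by (simp only: power_mult_distrib[symmetric])
  have "\<bar>eHm \<sigma> \<sigma>' n m F G x t k a\<bar> \<le> 2 * real m * (1 / sqrt \<gamma>) ^ k"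
    using \<gamma>_pos by (intro abs_eHm_le[OF \<sigma>_bound x_bound assms(1) \<sigma>'_bound F_bound _ assms(2)]) simp
  then have "\<bar>\<gamma> ^ k * eHm \<sigma> \<sigma>' n m F G x t k a\<bar> \<le> \<gamma> ^ k * (2 * real m * (1 / sqrt \<gamma>) ^ k)"
    using \<gamma>_pos by (simp add: abs_mult mult_left_mono)
  also have "\<dots> = 2 * real m * sqrt \<gamma> ^ k"
    using gamma_pow by (simp add: mult_ac)
  finally show ?thesis .
qed

lemma abs_termF_le:
  assumes "1 \<le> k" "a < n"
  shows "\<bar>termF \<sigma> \<sigma>' n m F G x \<gamma> t k a b\<bar> \<le> 2 * real m * sqrt \<gamma> ^ k"
proof -
  have "\<bar>termF \<sigma> \<sigma>' n m F G x \<gamma> t k a b\<bar>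
      = \<bar>\<gamma> ^ k * eHm \<sigma> \<sigma>' n m F G x t k a\<bar> * \<bar>traj \<sigma> n m F G x t b\<bar>"
    by (simp add: termF_def abs_mult)
  also have "\<dots> \<le> 2 * real m * sqrt \<gamma> ^ k * 1"
    using abs_gamma_pow_eHm_le[OF assms] abs_traj_le_one[OF \<sigma>_bound] \<gamma>_pos
    by (intro mult_mono) auto
  finally show ?thesis by simp
qed

lemma abs_termG_le:
  assumes "1 \<le> k" "c < n"
  shows "\<bar>termG \<sigma> \<sigma>' n m F G x \<gamma> t k c d\<bar> \<le> 2 * real m * sqrt \<gamma> ^ k"
proof -
  have "\<bar>termG \<sigma> \<sigma>' n m F G x \<gamma> t k c d\<bar>
      = \<bar>\<gamma> ^ k * eHm \<sigma> \<sigma>' n m F G x t k c\<bar> * \<bar>aug m (x (t + k)) d\<bar>"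
    by (simp add: termG_def abs_mult)
  also have "\<dots> \<le> 2 * real m * sqrt \<gamma> ^ k * 1"
    using abs_gamma_pow_eHm_le[OF assms] x_bound \<gamma>_pos
    by (intro mult_mono) (auto simp: aug_def)
  finally show ?thesis by simp
qed

context
  assumes \<gamma>_less_one: "\<gamma> < 1"
begin

lemma sqrt_gamma_bounds: "0 \<le> sqrt \<gamma>" "sqrt \<gamma> < 1"
  using \<gamma>_pos \<gamma>_less_one by simp_all

lemma summable_termF:
  assumes "a < n"
  shows "summable (\<lambda>k. termF \<sigma> \<sigma>' n m F G x \<gamma> t (Suc k) a b)"
  using assms abs_termF_le by (intro summable_shift_if_geometric_bound[OF _ sqrt_gamma_bounds])

lemma summable_termG:
  assumes "c < n"
  shows "summable (\<lambda>k. termG \<sigma> \<sigma>' n m F G x \<gamma> t (Suc k) c d)"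
  using assms abs_termG_le by (intro summable_shift_if_geometric_bound[OF _ sqrt_gamma_bounds])

lemma abs_DF_inf_minus_DF_K_le:
  assumes "a < n"
  shows "\<bar>DF_inf \<sigma> \<sigma>' n m F G x \<gamma> T a b - DF_K \<sigma> \<sigma>' n m F G x \<gamma> T K a b\<bar>
    \<le> T * (2 * real m * sqrt \<gamma> ^ Suc K / (1 - sqrt \<gamma>))"
proof -
  have "\<bar>DF_inf \<sigma> \<sigma>' n m F G x \<gamma> T a b - DF_K \<sigma> \<sigma>' n m F G x \<gamma> T K a b\<bar>
      \<le> card {1..T} * (2 * real m * sqrt \<gamma> ^ Suc K / (1 - sqrt \<gamma>))"
    unfolding DF_inf_def DF_K_def
    by (rule abs_sum_suminf_shift_minus_sum_le[OF _ sqrt_gamma_bounds]) (simp add: abs_termF_le assms)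
  then show ?thesis by simp
qed

lemma abs_DG_inf_minus_DG_K_le:
  assumes "c < n"
  shows "\<bar>DG_inf \<sigma> \<sigma>' n m F G x \<gamma> T c d - DG_K \<sigma> \<sigma>' n m F G x \<gamma> T K c d\<bar>
    \<le> T * (2 * real m * sqrt \<gamma> ^ Suc K / (1 - sqrt \<gamma>))"
proof -
  have "\<bar>DG_inf \<sigma> \<sigma>' n m F G x \<gamma> T c d - DG_K \<sigma> \<sigma>' n m F G x \<gamma> T K c d\<bar>
      \<le> card {1..T} * (2 * real m * sqrt \<gamma> ^ Suc K / (1 - sqrt \<gamma>))"
    unfolding DG_inf_def DG_K_def
    by (rule abs_sum_suminf_shift_minus_sum_le[OF _ sqrt_gamma_bounds]) (simp add: abs_termG_le assms)
  then show ?thesis by simp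
qed

end

end

theorem lemma1:
  fixes n m T :: nat and \<gamma> :: real and x :: "nat \<Rightarrow> nat \<Rightarrow> real"
    and \<sigma> \<sigma>' :: "real \<Rightarrow> real"
    and F :: "nat \<Rightarrow> nat \<Rightarrow> nat \<Rightarrow> real" and G :: "nat \<Rightarrow> nat \<Rightarrow> nat \<Rightarrow> real"
  assumes "1 \<le> m" and "m < n" and "1 \<le> T"
    and "0 < \<gamma>" and "\<gamma> < 1"
    and "\<forall>t j. j < m \<longrightarrow> \<bar>x t j\<bar> \<le> 1"
    and "\<forall>z. -1 \<le> \<sigma> z \<and> \<sigma> z \<le> 1"
    and "mono \<sigma>"
    and "\<forall>z. (\<sigma> has_real_derivative \<sigma>' z) (at z)"
    and "\<forall>z. \<sigma>' z \<le> 1"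
    and "\<forall>i. inf_norm n (F i) \<le> 1 / sqrt \<gamma>"
  shows "(\<forall>i t a b c d. 1 \<le> t \<and> t \<le> T \<and> a < n \<and> b < n \<and> c < n \<and> d < m + 1 \<longrightarrow>
            summable (\<lambda>k. termF \<sigma> \<sigma>' n m (F i) (G i) x \<gamma> t (Suc k) a b) \<and>
            summable (\<lambda>k. termG \<sigma> \<sigma>' n m (F i) (G i) x \<gamma> t (Suc k) c d))
       \<and> (\<forall>\<epsilon>0 > 0. \<exists>K \<ge> 1. \<forall>i a b c d. a < n \<and> b < n \<and> c < n \<and> d < m + 1 \<longrightarrow>
            \<bar>DF_inf \<sigma> \<sigma>' n m (F i) (G i) x \<gamma> T a b - DF_K \<sigma> \<sigma>' n m (F i) (G i) x \<gamma> T K a b\<bar> < \<epsilon>0 \<and>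
            \<bar>DG_inf \<sigma> \<sigma>' n m (F i) (G i) x \<gamma> T c d - DG_K \<sigma> \<sigma>' n m (F i) (G i) x \<gamma> T K c d\<bar> < \<epsilon>0)"
proof -
  have "\<forall>z. \<bar>\<sigma> z\<bar> \<le> 1"
    using assms(7) by (simp add: abs_le_iff)
  note hyps = assms(6) this abs_deriv_le_one_if_mono[OF assms(8-10)] spec[OF assms(11)] assms(4,5)
  show ?thesis
  proof (intro conjI allI impI)
    fix i t a b c d
    assume "1 \<le> t \<and> t \<le> T \<and> a < n \<and> b < n \<and> c < n \<and> d < m + 1"
    then show "summable (\<lambda>k. termF \<sigma> \<sigma>' n m (F i) (G i) x \<gamma> t (Suc k) a b)"
      and "summable (\<lambda>k. termG \<sigma> \<sigma>' n m (F i) (G i) x \<gamma> t (Suc k) c d)"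
      using summable_termF[OF hyps] summable_termG[OF hyps] by blast+
  next
    fix \<epsilon> :: real
    assume "0 < \<epsilon>"
    then obtain K where "1 \<le> K" and "T * (2 * real m * sqrt \<gamma> ^ Suc K / (1 - sqrt \<gamma>)) < \<epsilon>"
      using ex_geometric_tail_less[of "sqrt \<gamma>" \<epsilon> "T * (2 * real m)"] assms(4,5) by auto
    then show "\<exists>K \<ge> 1. \<forall>i a b c d. a < n \<and> b < n \<and> c < n \<and> d < m + 1 \<longrightarrow>
            \<bar>DF_inf \<sigma> \<sigma>' n m (F i) (G i) x \<gamma> T a b - DF_K \<sigma> \<sigma>' n m (F i) (G i) x \<gamma> T K a b\<bar> < \<epsilon> \<and>
            \<bar>DG_inf \<sigma> \<sigma>' n m (F i) (G i) x \<gamma> T c d - DG_K \<sigma> \<sigma>' n m (F i) (G i) x \<gamma> T K c d\<bar> < \<epsilon>"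
      using abs_DF_inf_minus_DF_K_le[OF hyps] abs_DG_inf_minus_DG_K_le[OF hyps]
      by (meson order_le_less_trans)
  qed
qed

end
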